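(* Let $K\ge1$, $\delta>1$, $\alpha\in(0,1)$ with $p/n\le\delta^{-1}<1-\alpha$, $\tau>0$, and positive constants $\phi_*,\phi^*$. If $(Y,X)\in U$ and $X\in U_x$, then $$\frac1n\sum_{i=1}^nH_i\otimes(x_ix_i^T)\succeq c_1(I_K\otimes\Sigma),$$ where $c_1>0$ depends only on $(K,\tau,\alpha,\phi_* )$.
   Context: $\Sigma\in\mathbb{R}^{p\times p}$ is positive definite; $x_i^T$ are the rows of $X\in\mathbb{R}^{n\times p}$; $Y$ has rows $\mathsf y_i\in\mathbb{R}^{K+1}$. $\mathcal L_i(u)=-\sum_k\mathsf y_{ik}u_k+\log\sum_{k'}e^{u_{k'}}$, $\hat{\mathsf B}\in\arg\min_{\mathsf B\in\mathbb{R}^{p\times(K+1)}}\sum_i\mathcal L_i(\mathsf B^Tx_i)$, $U=\{(Y,X):\hat{\mathsf B}\text{ exists},\ \|X\hat{\mathsf B}(I_{K+1}-\frac{\mathbf 1\mathbf 1^T}{K+1})\|_F^2<n\tau\}$. $\mathcal I=\{I\subset[n]:|I|=\lceil n(1-\alpha)\rceil\}$, $P_I=\sum_{i\in I}e_ie_i^T$, $U_x=\{X:\min_{I\in\mathcal I}\lambda_{\min}(\frac1n\Sigma^{-1/2}X^TP_IX\Sigma^{-1/2})\ge\phi_*^2,\ \frac1{\sqrt n}\|X\Sigma^{-1/2}\|_{op}\le\phi^*\}$. $Q\in\mathbb{R}^{(K+1)\times K}$ with $QQ^T=I_{K+1}-\frac{1}{K+1}\mathbf 1\mathbf 1^T$,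 $Q^TQ=I_K$; $L_i(u)=\mathcal L_i(Qu)$; $\hat B=\hat{\mathsf B}Q$; $H_i=\nabla^2L_i(\hat B^Tx_i)$. *)

theory Defs
  imports "HOL-Analysis.Analysis"
begin

text \<open>Matrices of varying size are represented as functions nat => nat => real;
  only the entries inside the stated index ranges are relevant.\<close>

type_synonym rvec = "nat \<Rightarrow> real"
type_synonym rmat = "nat \<Rightarrow> nat \<Rightarrow> real"

definition mmul :: "nat \<Rightarrow> rmat \<Rightarrow> rmat \<Rightarrow> rmat" where
  "mmul m A B = (\<lambda>i j. \<Sum>k<m. A i k * B k j)"

definition mvec :: "nat \<Rightarrow> rmat \<Rightarrow> rvec \<Rightarrow> rvec" where
  "mvec m A v = (\<lambda>i. \<Sum>k<m. A i k * v k)"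

definition transp :: "rmat \<Rightarrow> rmat" where
  "transp A = (\<lambda>i j. A j i)"

definition idm :: rmat where
  "idm = (\<lambda>i j. if i = j then 1 else 0)"

definition msub :: "rmat \<Rightarrow> rmat \<Rightarrow> rmat" where
  "msub A B = (\<lambda>i j. A i j - B i j)"

definition mscale :: "real \<Rightarrow> rmat \<Rightarrow> rmat" where
  "mscale c A = (\<lambda>i j. c * A i j)"

definition mat_on :: "nat \<Rightarrow> nat \<Rightarrow> rmat \<Rightarrow> bool" where
  "mat_on n m A \<longleftrightarrow> (\<forall>i j. (n \<le> i \<or> m \<le> j) \<longrightarrow> A i j = 0)"

definition mat_eq :: "nat \<Rightarrow> nat \<Rightarrow> rmat \<Rightarrow> rmat \<Rightarrow> bool" where
  "mat_eq n m A B \<longleftrightarrow> (\<forall>i<n. \<forall>j<m. A i j = B i j)"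

definition sym_mat :: "nat \<Rightarrow> rmat \<Rightarrow> bool" where
  "sym_mat n A \<longleftrightarrow> (\<forall>i<n. \<forall>j<n. A i j = A j i)"

definition quad :: "nat \<Rightarrow> rmat \<Rightarrow> rvec \<Rightarrow> real" where
  "quad n A v = (\<Sum>i<n. \<Sum>j<n. v i * A i j * v j)"

definition pos_def :: "nat \<Rightarrow> rmat \<Rightarrow> bool" where
  "pos_def n A \<longleftrightarrow> sym_mat n A \<and> (\<forall>v. (\<exists>i<n. v i \<noteq> 0) \<longrightarrow> quad n A v > 0)"

definition psd :: "nat \<Rightarrow> rmat \<Rightarrow> bool" where
  "psd n A \<longleftrightarrow> (\<forall>v. quad n A v \<ge> 0)"

definition loewner_ge :: "nat \<Rightarrow> rmat \<Rightarrow> rmat \<Rightarrow> bool" where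
  "loewner_ge n A B \<longleftrightarrow> psd n (msub A B)"

definition is_eigenvalue :: "nat \<Rightarrow> rmat \<Rightarrow> real \<Rightarrow> bool" where
  "is_eigenvalue n A l \<longleftrightarrow>
     (\<exists>v. (\<exists>i<n. v i \<noteq> 0) \<and> (\<forall>i<n. mvec n A v i = l * v i))"

definition lambda_min :: "nat \<Rightarrow> rmat \<Rightarrow> real" where
  "lambda_min n A = Inf {l. is_eigenvalue n A l}"

definition inv_sqrt :: "nat \<Rightarrow> rmat \<Rightarrow> rmat" where
  "inv_sqrt n Sig = (THE S. mat_on n n S \<and> pos_def n S \<and>
       mat_eq n n (mmul n S (mmul n Sig S)) idm)"

definition vnorm :: "nat \<Rightarrow> rvec \<Rightarrow> real" where
  "vnorm n v = sqrt (\<Sum>i<n. (v i)\<^sup>2)"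

definition opnorm :: "nat \<Rightarrow> nat \<Rightarrow> rmat \<Rightarrow> real" where
  "opnorm n m A = Sup {vnorm n (mvec m A v) | v. vnorm m v \<le> 1}"

definition frob_sq :: "nat \<Rightarrow> nat \<Rightarrow> rmat \<Rightarrow> real" where
  "frob_sq n m A = (\<Sum>i<n. \<Sum>j<m. (A i j)\<^sup>2)"

text \<open>Kronecker product A \<otimes> B with B of size p x p (row index (a,r) \<mapsto> a*p+r).\<close>
definition kron :: "nat \<Rightarrow> rmat \<Rightarrow> rmat \<Rightarrow> rmat" where
  "kron p A B = (\<lambda>i j. A (i div p) (j div p) * B (i mod p) (j mod p))"

definition centering :: "nat \<Rightarrow> rmat" where
  "centering m = (\<lambda>i j. idm i j - 1 / real m)"

definition projI :: "nat set \<Rightarrow> rmat" where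
  "projI I = (\<lambda>i j. if i = j \<and> i \<in> I then 1 else 0)"

definition mlloss :: "nat \<Rightarrow> rvec \<Rightarrow> rvec \<Rightarrow> real" where
  "mlloss m y u = - (\<Sum>k<m. y k * u k) + ln (\<Sum>k'<m. exp (u k'))"

definition total_loss :: "nat \<Rightarrow> nat \<Rightarrow> nat \<Rightarrow> rmat \<Rightarrow> rmat \<Rightarrow> rmat \<Rightarrow> real" where
  "total_loss n p m Y X B = (\<Sum>i<n. mlloss m (Y i) (mvec p (transp B) (X i)))"

definition partial :: "(rvec \<Rightarrow> real) \<Rightarrow> nat \<Rightarrow> rvec \<Rightarrow> real" where
  "partial f b u = deriv (\<lambda>s. f (u(b := u b + s))) 0"

definition hessian :: "(rvec \<Rightarrow> real) \<Rightarrow> rvec \<Rightarrow> rmat" where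
  "hessian f u = (\<lambda>a b. partial (\<lambda>v. partial f b v) a u)"

end

theory Submission
  imports Defs
begin

text \<open>
  By Markov's inequality at least \<open>n(1-\<alpha>)\<close> rows have centred scores
  \<open>z\<^sub>i = C B\<^sup>T x\<^sub>i\<close> with \<open>\<parallel>z\<^sub>i\<parallel>\<^sup>2 < \<tau>/\<alpha>\<close>; fix a set \<open>I\<close> of exactly
  \<open>\<lceil>n(1-\<alpha>)\<rceil>\<close> of them.  Because \<open>Q Q\<^sup>T = C\<close>, the class scores seen by \<open>L\<^sub>i\<close> at
  \<open>B\<^sup>T x\<^sub>i\<close> are exactly \<open>z\<^sub>i\<close>, and \<open>w\<^sup>T H\<^sub>i w\<close> is the variance of \<open>Q w\<close> under the
  softmax probabilities of \<open>z\<^sub>i\<close>.  This variance is always nonnegative, and for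
  \<open>i \<in> I\<close> the probabilities lie within a factor \<open>e\<^sup>2\<^sup>R\<close> of each other,
  \<open>R = \<surd>(\<tau>/\<alpha>)\<close>, which together with \<open>\<Sum>\<^sub>k (Qw)\<^sub>k = 0\<close> and
  \<open>\<parallel>Qw\<parallel> = \<parallel>w\<parallel>\<close> gives \<open>H\<^sub>i \<succeq> e\<^sup>-\<^sup>4\<^sup>R/(K+1) I\<^sub>K\<close>.  Dropping the rows outside
  \<open>I\<close>, the Kronecker average is bounded below through the \<open>U\<^sub>x\<close> condition for
  \<open>I\<close>, which says \<open>\<Sum>\<^sub>i\<^sub>\<in>\<^sub>I (x\<^sub>i\<^sup>T y)\<^sup>2 \<ge> n \<phi>\<^sub>*\<^sup>2 y\<^sup>T \<Sigma> y\<close>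
  (substitute \<open>y = \<Sigma>\<^sup>-\<^sup>1\<^sup>/\<^sup>2 v\<close>).  Hence \<open>c\<^sub>1 = e\<^sup>-\<^sup>4\<^sup>R \<phi>\<^sub>*\<^sup>2/(K+1)\<close>.
\<close>

section \<open>Coordinate vectors and orthonormal families\<close>

definition vdot :: "nat \<Rightarrow> rvec \<Rightarrow> rvec \<Rightarrow> real" where
  "vdot p u v = (\<Sum>i<p. u i * v i)"

lemma vdot_commute: "vdot p u v = vdot p v u"
  unfolding vdot_def by (simp add: mult.commute)

lemma vdot_cong:
  "(\<And>i. i < p \<Longrightarrow> u i = u' i) \<Longrightarrow> (\<And>i. i < p \<Longrightarrow> v i = v' i) \<Longrightarrow> vdot p u v = vdot p u' v'"
  unfolding vdot_def by (rule sum.cong) auto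

lemma vdot_self_nonneg: "0 \<le> vdot p v v"
  unfolding vdot_def by (auto intro: sum_nonneg)

lemma vdot_self_eq_0D: "vdot p v v = 0 \<Longrightarrow> i < p \<Longrightarrow> v i = 0"
  unfolding vdot_def by (subst (asm) sum_nonneg_eq_0_iff) auto

lemma square_le_vdot_self: "i < p \<Longrightarrow> (v i)\<^sup>2 \<le> vdot p v v"
  unfolding vdot_def power2_eq_square
  by (rule member_le_sum[of i "{..<p}" "\<lambda>j. v j * v j"]) auto

lemma vdot_self_pos: "i < p \<Longrightarrow> v i \<noteq> 0 \<Longrightarrow> 0 < vdot p v v"
  using square_le_vdot_self[of i p v] by (smt (verit) zero_less_power2)

lemma vdot_self_neq_0D: "vdot p v v \<noteq> 0 \<Longrightarrow> \<exists>i<p. v i \<noteq> 0"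
  unfolding vdot_def by (metis (mono_tags) lessThan_iff mult_zero_left sum.neutral)

lemma vdot_sum_right: "vdot p u (\<lambda>i. \<Sum>j\<in>J. c j * w j i) = (\<Sum>j\<in>J. c j * vdot p u (w j))"
  unfolding vdot_def by (simp add: sum_distrib_left mult_ac sum.swap[of _ J])

lemma vdot_scale_right: "vdot p u (\<lambda>i. a * v i) = a * vdot p u v"
  unfolding vdot_def by (simp add: sum_distrib_left mult_ac)

lemma vdot_scale_left: "vdot p (\<lambda>i. a * v i) u = a * vdot p v u"
  unfolding vdot_def by (simp add: sum_distrib_left mult_ac)

lemma vdot_diff_right: "vdot p u (\<lambda>i. v i - v' i) = vdot p u v - vdot p u v'"
  unfolding vdot_def by (simp add: sum_subtractf algebra_simps)

lemma vdot_add_right: "vdot p u (\<lambda>i. v i + v' i) = vdot p u v + vdot p u v'"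
  unfolding vdot_def by (simp add: sum.distrib algebra_simps)

lemma vdot_idm_right: "l < p \<Longrightarrow> vdot p u (idm l) = u l"
  unfolding vdot_def idm_def by (simp add: if_distrib cong: if_cong)

lemma vdot_idm_self: "l < p \<Longrightarrow> vdot p (idm l) (idm l) = 1"
  by (simp add: vdot_idm_right) (simp add: idm_def)

definition orthonormal :: "nat \<Rightarrow> nat \<Rightarrow> (nat \<Rightarrow> rvec) \<Rightarrow> bool" where
  "orthonormal p m w \<longleftrightarrow> (\<forall>j<m. \<forall>l<m. vdot p (w j) (w l) = (if j = l then 1 else 0))"

definition orth_residual :: "nat \<Rightarrow> nat \<Rightarrow> (nat \<Rightarrow> rvec) \<Rightarrow> rvec \<Rightarrow> rvec" where
  "orth_residual p m w x = (\<lambda>i. x i - (\<Sum>j<m. vdot p (w j) x * w j i))"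

lemma vdot_orthonormal_comb:
  assumes "orthonormal p m w" "l < m"
  shows "vdot p (w l) (\<lambda>i. \<Sum>j<m. c j * w j i) = c l"
proof -
  have "vdot p (w l) (\<lambda>i. \<Sum>j<m. c j * w j i) = (\<Sum>j<m. if j = l then c j else 0)"
    unfolding vdot_sum_right using assms by (intro sum.cong) (auto simp: orthonormal_def)
  thus ?thesis using assms(2) by simp
qed

lemma orth_residual_orth:
  "orthonormal p m w \<Longrightarrow> l < m \<Longrightarrow> vdot p (w l) (orth_residual p m w x) = 0"
  unfolding orth_residual_def
  by (simp add: vdot_diff_right vdot_orthonormal_comb[of p m w l "\<lambda>j. vdot p (w j) x"])

lemma vdot_orth_residual_self:
  assumes "orthonormal p m w"
  shows "vdot p (orth_residual p m w x) (orth_residual p m w x)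
           = vdot p x x - (\<Sum>j<m. (vdot p (w j) x)\<^sup>2)"
proof -
  let ?r = "orth_residual p m w x"
  have "vdot p ?r ?r = vdot p ?r x - vdot p ?r (\<lambda>i. \<Sum>j<m. vdot p (w j) x * w j i)"
    by (subst (2) orth_residual_def) (simp add: vdot_diff_right)
  also have "vdot p ?r (\<lambda>i. \<Sum>j<m. vdot p (w j) x * w j i) = 0"
    by (simp add: vdot_sum_right vdot_commute[of p ?r] orth_residual_orth[OF assms])
  also have "vdot p ?r x = vdot p x ?r" by (rule vdot_commute)
  also have "\<dots> = vdot p x x - (\<Sum>j<m. vdot p (w j) x * vdot p (w j) x)"
    unfolding orth_residual_def vdot_diff_right vdot_sum_right by (simp add: vdot_commute)
  finally show ?thesis by (simp add: power2_eq_square)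
qed

lemma bessel_inequality: "orthonormal p m w \<Longrightarrow> (\<Sum>j<m. (vdot p (w j) x)\<^sup>2) \<le> vdot p x x"
  using vdot_orth_residual_self[of p m w x] vdot_self_nonneg[of p "orth_residual p m w x"]
  by linarith

lemma sum_sq_coords_orthonormal:
  assumes "orthonormal p m w"
  shows "(\<Sum>i<p. \<Sum>j<m. (vdot p (w j) (idm i))\<^sup>2) = real m"
proof -
  have "(\<Sum>i<p. \<Sum>j<m. (vdot p (w j) (idm i))\<^sup>2) = (\<Sum>j<m. vdot p (w j) (w j))"
    by (subst sum.swap) (simp add: vdot_idm_right, simp add: vdot_def power2_eq_square)
  also have "\<dots> = real m" using assms by (simp add: orthonormal_def)
  finally show ?thesis .
qed

lemma orthonormal_le_dim: "orthonormal p m w \<Longrightarrow> m \<le> p"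
proof -
  assume o: "orthonormal p m w"
  have "real m = (\<Sum>i<p. \<Sum>j<m. (vdot p (w j) (idm i))\<^sup>2)"
    using sum_sq_coords_orthonormal[OF o] by simp
  also have "\<dots> \<le> (\<Sum>i<p. vdot p (idm i) (idm i))"
    by (rule sum_mono) (rule bessel_inequality[OF o])
  also have "\<dots> = real p" by (simp add: vdot_idm_self)
  finally show ?thesis by simp
qed

lemma orthonormal_extend:
  assumes "orthonormal p k w" "vdot p v v = 1" "\<And>j. j < k \<Longrightarrow> vdot p (w j) v = 0"
  shows "orthonormal p (Suc k) (w(k := v))"
  unfolding orthonormal_def
proof (intro allI impI)
  fix j l assume "j < Suc k" "l < Suc k"
  then show "vdot p ((w(k := v)) j) ((w(k := v)) l) = (if j = l then 1 else 0)"
    using assms unfolding orthonormal_def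
    by (cases "j = k"; cases "l = k") (auto simp: less_Suc_eq vdot_commute)
qed

text \<open>Normalization also zeroes the coordinates \<open>\<ge> p\<close>, so that unit vectors
  live in a compact cube of the product space \<open>nat \<Rightarrow> real\<close>.\<close>

definition normalize_vec :: "nat \<Rightarrow> rvec \<Rightarrow> rvec" where
  "normalize_vec p x = (\<lambda>i. if i < p then x i / sqrt (vdot p x x) else 0)"

lemma vdot_normalize_vec_right: "vdot p u (normalize_vec p x) = vdot p u x / sqrt (vdot p x x)"
proof -
  have "vdot p u (normalize_vec p x) = vdot p u (\<lambda>i. (1 / sqrt (vdot p x x)) * x i)"
    by (rule vdot_cong) (auto simp: normalize_vec_def)
  also have "\<dots> = (1 / sqrt (vdot p x x)) * vdot p u x" by (rule vdot_scale_right)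
  finally show ?thesis by simp
qed

lemma vdot_normalize_vec_self:
  assumes "vdot p x x \<noteq> 0"
  shows "vdot p (normalize_vec p x) (normalize_vec p x) = 1"
proof -
  have "vdot p (normalize_vec p x) (normalize_vec p x) = vdot p (normalize_vec p x) x / sqrt (vdot p x x)"
    by (rule vdot_normalize_vec_right)
  also have "vdot p (normalize_vec p x) x = vdot p x x / sqrt (vdot p x x)"
    by (subst vdot_commute) (rule vdot_normalize_vec_right)
  finally show ?thesis using assms vdot_self_nonneg[of p x] by simp
qed

lemma vdot_normalize_vec_eq_0: "vdot p u x = 0 \<Longrightarrow> vdot p u (normalize_vec p x) = 0"
  by (simp add: vdot_normalize_vec_right)

lemma normalize_vec_outside: "p \<le> i \<Longrightarrow> normalize_vec p x i = 0"
  by (simp add: normalize_vec_def)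

lemma exists_unit_orth_to_orthonormal:
  assumes o: "orthonormal p k w" and k: "k < p"
  shows "\<exists>v. vdot p v v = 1 \<and> (\<forall>j<k. vdot p (w j) v = 0) \<and> (\<forall>i\<ge>p. v i = 0)"
proof -
  have "\<exists>i<p. vdot p (orth_residual p k w (idm i)) (orth_residual p k w (idm i)) \<noteq> 0"
  proof (rule ccontr)
    assume "\<not> ?thesis"
    then have "\<And>i. i < p \<Longrightarrow> (\<Sum>j<k. (vdot p (w j) (idm i))\<^sup>2) = 1"
      using vdot_orth_residual_self[OF o] vdot_idm_self by fastforce
    then have "real k = real p"
      using sum_sq_coords_orthonormal[OF o] by simp
    with k show False by simp
  qed
  then obtain i where "i < p"
    and nz: "vdot p (orth_residual p k w (idm i)) (orth_residual p k w (idm i)) \<noteq> 0" by blast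
  show ?thesis
    using nz orth_residual_orth[OF o]
    by (intro exI[of _ "normalize_vec p (orth_residual p k w (idm i))"])
       (simp add: vdot_normalize_vec_self vdot_normalize_vec_eq_0 normalize_vec_outside)
qed

lemma orthonormal_expansion:
  assumes o: "orthonormal p p w" and i: "i < p"
  shows "x i = (\<Sum>j<p. vdot p (w j) x * w j i)"
proof -
  let ?r = "orth_residual p p w x"
  have "vdot p ?r ?r = 0"
  proof (rule ccontr)
    assume nz: "vdot p ?r ?r \<noteq> 0"
    have "orthonormal p (Suc p) (w(p := normalize_vec p ?r))"
      using nz orth_residual_orth[OF o]
      by (intro orthonormal_extend[OF o]) (simp_all add: vdot_normalize_vec_self vdot_normalize_vec_eq_0)
    then show False using orthonormal_le_dim by fastforce
  qed
  from vdot_self_eq_0D[OF this i] show ?thesis by (simp add: orth_residual_def)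
qed

lemma parseval:
  assumes "orthonormal p p w"
  shows "vdot p x x = (\<Sum>j<p. (vdot p (w j) x)\<^sup>2)"
proof -
  have "vdot p x x = vdot p x (\<lambda>i. \<Sum>j<p. vdot p (w j) x * w j i)"
    by (rule vdot_cong) (use orthonormal_expansion[OF assms] in auto)
  thus ?thesis by (simp add: vdot_sum_right vdot_commute power2_eq_square)
qed

section \<open>Spectral theorem for symmetric matrices\<close>

lemma quad_eq_vdot_mvec: "quad p M v = vdot p v (mvec p M v)"
  unfolding quad_def vdot_def mvec_def by (simp add: sum_distrib_left mult_ac)

lemma mvec_cong: "(\<And>i. i < p \<Longrightarrow> x i = y i) \<Longrightarrow> mvec p M x = mvec p M y"
  unfolding mvec_def by (intro ext sum.cong) auto

lemma mvec_scale: "mvec p M (\<lambda>i. a * u i) = (\<lambda>j. a * mvec p M u j)"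
  unfolding mvec_def by (simp add: sum_distrib_left algebra_simps)

lemma mvec_add_scaled: "mvec p M (\<lambda>i. u i + a * v i) = (\<lambda>j. mvec p M u j + a * mvec p M v j)"
  unfolding mvec_def by (simp add: sum.distrib sum_distrib_left algebra_simps)

lemma mvec_diff: "mvec p M (\<lambda>i. u i - v i) j = mvec p M u j - mvec p M v j"
  unfolding mvec_def by (simp add: sum_subtractf algebra_simps)

lemma mvec_sum: "mvec p M (\<lambda>i. \<Sum>l\<in>J. c l * w l i) j = (\<Sum>l\<in>J. c l * mvec p M (w l) j)"
  unfolding mvec_def by (simp add: sum_distrib_left sum_distrib_right mult_ac sum.swap[of _ J])

lemma mvec_mmul: "mvec q (mmul m A B) v = mvec m A (mvec q B v)"
proof (rule ext)
  fix i
  have "mvec q (mmul m A B) v i = (\<Sum>k<q. \<Sum>l<m. A i l * B l k * v k)"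
    unfolding mvec_def mmul_def by (simp add: sum_distrib_right)
  also have "\<dots> = (\<Sum>l<m. \<Sum>k<q. A i l * B l k * v k)" by (rule sum.swap)
  also have "\<dots> = mvec m A (mvec q B v) i"
    unfolding mvec_def by (simp add: sum_distrib_left mult.assoc)
  finally show "mvec q (mmul m A B) v i = mvec m A (mvec q B v) i" .
qed

lemma mvec_idm_right: "l < p \<Longrightarrow> mvec p A (idm l) i = A i l"
  unfolding mvec_def idm_def by (simp add: if_distrib cong: if_cong)

lemma sym_mat_vdot_mvec:
  assumes "sym_mat p M"
  shows "vdot p u (mvec p M v) = vdot p (mvec p M u) v"
proof -
  have "vdot p u (mvec p M v) = (\<Sum>i<p. \<Sum>j<p. u i * M i j * v j)"
    unfolding vdot_def mvec_def by (simp add: sum_distrib_left mult_ac)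
  also have "\<dots> = (\<Sum>j<p. \<Sum>i<p. M j i * u i * v j)"
    using assms unfolding sym_mat_def by (subst sum.swap) (intro sum.cong refl, simp add: mult_ac)
  also have "\<dots> = vdot p (mvec p M u) v"
    unfolding vdot_def mvec_def by (simp add: sum_distrib_right)
  finally show ?thesis .
qed

lemma sym_mat_if_vdot_mvec_commute:
  assumes "\<And>u v. vdot p u (mvec p M v) = vdot p v (mvec p M u)"
  shows "sym_mat p M"
  unfolding sym_mat_def
proof (intro allI impI)
  fix i j assume "i < p" "j < p"
  then show "M i j = M j i"
    using assms[of "idm i" "idm j"] by (simp add: vdot_commute[of p "idm _"] vdot_idm_right mvec_idm_right)
qed

lemma quad_add_scaled:
  assumes "sym_mat p M"
  shows "quad p M (\<lambda>i. v i + t * y i)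
           = quad p M v + 2 * t * vdot p y (mvec p M v) + t\<^sup>2 * quad p M y"
proof -
  have "quad p M (\<lambda>i. v i + t * y i)
      = vdot p (\<lambda>i. v i + t * y i) (\<lambda>j. mvec p M v j + t * mvec p M y j)"
    by (simp add: quad_eq_vdot_mvec mvec_add_scaled)
  also have "\<dots> = vdot p v (mvec p M v) + t * vdot p v (mvec p M y) + t * vdot p y (mvec p M v)
      + t * t * vdot p y (mvec p M y)"
    unfolding vdot_def by (simp add: sum.distrib sum_distrib_left algebra_simps)
  also have "vdot p v (mvec p M y) = vdot p y (mvec p M v)"
    using sym_mat_vdot_mvec[OF assms, of v y] by (simp add: vdot_commute)
  finally show ?thesis by (simp add: quad_eq_vdot_mvec power2_eq_square algebra_simps)
qed

lemma vdot_add_scaled_self: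
  "vdot p (\<lambda>i. v i + t * y i) (\<lambda>i. v i + t * y i) = vdot p v v + 2 * t * vdot p y v + t\<^sup>2 * vdot p y y"
  unfolding vdot_def by (simp add: sum.distrib sum_distrib_left power2_eq_square algebra_simps)

lemma quad_normalize_vec: "quad p M (normalize_vec p x) = quad p M x / vdot p x x"
proof -
  have "quad p M (normalize_vec p x) = (\<Sum>i<p. \<Sum>j<p. x i * M i j * x j / (sqrt (vdot p x x))\<^sup>2)"
    unfolding quad_def normalize_vec_def by (intro sum.cong) (auto simp: power2_eq_square)
  then show ?thesis using vdot_self_nonneg[of p x] by (simp add: quad_def sum_divide_distrib)
qed

lemma linear_coeff_eq_0_if_nonneg:
  fixes b c :: real
  assumes "\<And>t. 0 \<le> 2 * t * b + t\<^sup>2 * c"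
  shows "b = 0"
proof (rule ccontr)
  assume b: "b \<noteq> 0"
  define s where "s = 1 / (\<bar>c\<bar> + 1)"
  have s: "s > 0" "s * \<bar>c\<bar> < 1" unfolding s_def by (auto simp: field_simps)
  have "0 \<le> 2 * (- b * s) * b + (- b * s)\<^sup>2 * c" by (rule assms)
  hence "0 \<le> b\<^sup>2 * s * (s * c - 2)" by (simp add: power2_eq_square algebra_simps)
  moreover have "s * c \<le> s * \<bar>c\<bar>" using s by (simp add: mult_left_mono)
  then have "s * c - 2 < 0" using s by linarith
  then have "b\<^sup>2 * s * (s * c - 2) < 0" using b s by (simp add: mult_pos_neg)
  ultimately show False by linarith
qed

lemma compact_cube: "compact {v::rvec. \<forall>i. v i \<in> (if i < p then {-1..1} else {0})}"
proof -
  have "compactin (product_topology (\<lambda>i. euclidean) UNIV)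
          (PiE UNIV (\<lambda>i::nat. if i < p then {-1..1::real} else {0}))"
    by (subst compactin_PiE) auto
  moreover have "PiE UNIV (\<lambda>i::nat. if i < p then {-1..1::real} else {0})
      = {v::rvec. \<forall>i. v i \<in> (if i < p then {-1..1} else {0})}"
    by (auto simp: PiE_def Pi_def)
  ultimately show ?thesis by (simp add: euclidean_product_topology)
qed

lemma quad_attains_min_on_orth_complement:
  assumes o: "orthonormal p k w" and k: "k < p"
  shows "\<exists>v. vdot p v v = 1 \<and> (\<forall>j<k. vdot p (w j) v = 0) \<and>
           (\<forall>x. (\<forall>j<k. vdot p (w j) x = 0) \<longrightarrow> quad p M v * vdot p x x \<le> quad p M x)"
proof -
  define C where "C = {v::rvec. \<forall>i. v i \<in> (if i < p then {-1..1} else {0})}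
      \<inter> {v. vdot p v v = 1} \<inter> (\<Inter>j<k. {v. vdot p (w j) v = 0})"
  have "continuous_on UNIV (\<lambda>v::rvec. vdot p u v)" for u
    unfolding vdot_def by (intro continuous_intros continuous_on_product_coordinates)
  moreover have "continuous_on UNIV (\<lambda>v::rvec. vdot p v v)"
    unfolding vdot_def by (intro continuous_intros continuous_on_product_coordinates)
  ultimately have "compact C"
    unfolding C_def by (intro compact_Int_closed compact_cube closed_INT ballI closed_Collect_eq) auto
  have in_C: "v \<in> C" if "vdot p v v = 1" "\<forall>j<k. vdot p (w j) v = 0" "\<forall>i\<ge>p. v i = 0" for v
  proof -
    have "\<bar>v i\<bar> \<le> 1" if "i < p" for i
      using square_le_vdot_self[OF that, of v] \<open>vdot p v v = 1\<close> abs_le_square_iff[of "v i" 1] by simp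
    then show ?thesis using that unfolding C_def by (auto simp: abs_le_iff)
  qed
  obtain v0 where "vdot p v0 v0 = 1" "\<forall>j<k. vdot p (w j) v0 = 0" "\<forall>i\<ge>p. v0 i = 0"
    using exists_unit_orth_to_orthonormal[OF o k] by blast
  then have "v0 \<in> C" by (rule in_C)
  moreover have "continuous_on C (\<lambda>v. quad p M v)"
    unfolding quad_def by (intro continuous_intros continuous_on_subset[OF continuous_on_product_coordinates subset_UNIV])
  ultimately obtain v where "v \<in> C" and v_min: "\<And>y. y \<in> C \<Longrightarrow> quad p M v \<le> quad p M y"
    using continuous_attains_inf[OF \<open>compact C\<close>] by blast
  have "quad p M v * vdot p x x \<le> quad p M x" if x_orth: "\<forall>j<k. vdot p (w j) x = 0" for x
  proof (cases "vdot p x x = 0")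
    case True
    then have "quad p M x = 0" unfolding quad_def by (simp add: vdot_self_eq_0D)
    then show ?thesis using True by simp
  next
    case False
    have "normalize_vec p x \<in> C"
      using False x_orth by (intro in_C) (simp_all add: vdot_normalize_vec_self vdot_normalize_vec_eq_0 normalize_vec_outside)
    then have "quad p M v \<le> quad p M x / vdot p x x" using v_min quad_normalize_vec by metis
    then show ?thesis using False vdot_self_nonneg[of p x] by (simp add: field_simps)
  qed
  then show ?thesis using \<open>v \<in> C\<close> unfolding C_def by blast
qed

lemma rayleigh_min_is_eigvec:
  assumes sym: "sym_mat p M"
    and eig: "\<And>j i. j < k \<Longrightarrow> i < p \<Longrightarrow> mvec p M (w j) i = lam j * w j i"
    and v_unit: "vdot p v v = 1" and v_orth: "\<forall>j<k. vdot p (w j) v = 0"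
    and v_min: "\<And>x. \<forall>j<k. vdot p (w j) x = 0 \<Longrightarrow> quad p M v * vdot p x x \<le> quad p M x"
    and i: "i < p"
  shows "mvec p M v i = quad p M v * v i"
proof -
  define m where "m = quad p M v"
  have stationary: "vdot p y (mvec p M v) - m * vdot p y v = 0"
    if y_orth: "\<forall>j<k. vdot p (w j) y = 0" for y
  proof (rule linear_coeff_eq_0_if_nonneg)
    fix t
    have "\<forall>j<k. vdot p (w j) (\<lambda>i. v i + t * y i) = 0"
      using y_orth v_orth by (simp add: vdot_add_right vdot_scale_right)
    then have "m * vdot p (\<lambda>i. v i + t * y i) (\<lambda>i. v i + t * y i) \<le> quad p M (\<lambda>i. v i + t * y i)"
      unfolding m_def by (rule v_min)
    then show "0 \<le> 2 * t * (vdot p y (mvec p M v) - m * vdot p y v) + t\<^sup>2 * (quad p M y - m * vdot p y y)"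
      using v_unit unfolding vdot_add_scaled_self quad_add_scaled[OF sym] m_def
      by (simp add: algebra_simps)
  qed
  define g where "g = (\<lambda>i. mvec p M v i - m * v i)"
  have "\<forall>j<k. vdot p (w j) g = 0"
  proof (intro allI impI)
    fix j assume j: "j < k"
    have "vdot p (w j) (mvec p M v) = vdot p (mvec p M (w j)) v" by (rule sym_mat_vdot_mvec[OF sym])
    also have "\<dots> = vdot p (\<lambda>i. lam j * w j i) v" by (rule vdot_cong) (use eig j in auto)
    finally show "vdot p (w j) g = 0"
      using v_orth j unfolding g_def by (simp add: vdot_diff_right vdot_scale_right vdot_scale_left)
  qed
  moreover have "vdot p g g = vdot p g (mvec p M v) - m * vdot p g v"
    by (subst (2) g_def) (simp add: vdot_diff_right vdot_scale_right)
  ultimately have "vdot p g g = 0" using stationary by simp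
  from vdot_self_eq_0D[OF this i] show ?thesis by (simp add: g_def m_def)
qed

lemma orthonormal_eigvecs_exist:
  assumes sym: "sym_mat p M" and "k \<le> p"
  shows "\<exists>w lam. orthonormal p k w \<and> (\<forall>j<k. \<forall>i<p. mvec p M (w j) i = lam j * w j i)"
  using \<open>k \<le> p\<close>
proof (induction k)
  case 0
  show ?case by (auto simp: orthonormal_def)
next
  case (Suc k)
  then obtain w lam where o: "orthonormal p k w"
    and eig: "\<forall>j<k. \<forall>i<p. mvec p M (w j) i = lam j * w j i" by auto
  from Suc.prems obtain v where v_unit: "vdot p v v = 1" and v_orth: "\<forall>j<k. vdot p (w j) v = 0"
    and v_min: "\<forall>x. (\<forall>j<k. vdot p (w j) x = 0) \<longrightarrow> quad p M v * vdot p x x \<le> quad p M x"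
    using quad_attains_min_on_orth_complement[OF o, of M] by auto
  have "\<forall>i<p. mvec p M v i = quad p M v * v i"
    using rayleigh_min_is_eigvec[OF sym _ v_unit v_orth] eig v_min by blast
  moreover have "orthonormal p (Suc k) (w(k := v))"
    using v_orth by (intro orthonormal_extend[OF o v_unit]) auto
  ultimately have "orthonormal p (Suc k) (w(k := v)) \<and>
      (\<forall>j<Suc k. \<forall>i<p. mvec p M ((w(k := v)) j) i = (lam(k := quad p M v)) j * (w(k := v)) j i)"
    using eig by (simp add: less_Suc_eq)
  then show ?case by blast
qed

definition eigenbasis :: "nat \<Rightarrow> rmat \<Rightarrow> (nat \<Rightarrow> rvec) \<Rightarrow> (nat \<Rightarrow> real) \<Rightarrow> bool" where
  "eigenbasis p M w lam \<longleftrightarrow> orthonormal p p w \<and> (\<forall>j<p. \<forall>i<p. mvec p M (w j) i = lam j * w j i)"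

lemma eigenbasis_exists: "sym_mat p M \<Longrightarrow> \<exists>w lam. eigenbasis p M w lam"
  unfolding eigenbasis_def using orthonormal_eigvecs_exist[of p M p] by auto

section \<open>Matrices with a prescribed eigenbasis; the inverse square root\<close>

definition spectral_mat :: "nat \<Rightarrow> (nat \<Rightarrow> rvec) \<Rightarrow> (nat \<Rightarrow> real) \<Rightarrow> rmat" where
  "spectral_mat p w f = (\<lambda>i l. if i < p \<and> l < p then \<Sum>j<p. w j i * f j * w j l else 0)"

lemma mvec_spectral_mat:
  assumes "i < p"
  shows "mvec p (spectral_mat p w f) x i = (\<Sum>j<p. (f j * vdot p (w j) x) * w j i)"
proof -
  have "mvec p (spectral_mat p w f) x i = (\<Sum>l<p. \<Sum>j<p. w j i * f j * w j l * x l)"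
    unfolding mvec_def spectral_mat_def using assms by (simp add: sum_distrib_right)
  also have "\<dots> = (\<Sum>j<p. \<Sum>l<p. w j i * f j * w j l * x l)" by (rule sum.swap)
  also have "\<dots> = (\<Sum>j<p. (f j * vdot p (w j) x) * w j i)"
    unfolding vdot_def by (intro sum.cong refl) (simp add: sum_distrib_left mult_ac)
  finally show ?thesis .
qed

lemma vdot_mvec_spectral_mat:
  assumes "orthonormal p p w" "j < p"
  shows "vdot p (w j) (mvec p (spectral_mat p w f) x) = f j * vdot p (w j) x"
proof -
  have "vdot p (w j) (mvec p (spectral_mat p w f) x)
      = vdot p (w j) (\<lambda>i. \<Sum>l<p. (f l * vdot p (w l) x) * w l i)"
    by (rule vdot_cong) (simp_all add: mvec_spectral_mat)
  then show ?thesis using vdot_orthonormal_comb[OF assms] by simp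
qed

lemma mvec_spectral_mat_comp:
  assumes "orthonormal p p w" "i < p"
  shows "mvec p (spectral_mat p w f) (mvec p (spectral_mat p w g) x) i
           = mvec p (spectral_mat p w (\<lambda>j. f j * g j)) x i"
  using assms by (simp add: mvec_spectral_mat vdot_mvec_spectral_mat mult_ac)

lemma mvec_spectral_mat_1:
  assumes "orthonormal p p w" "i < p"
  shows "mvec p (spectral_mat p w (\<lambda>_. 1)) x i = x i"
  using assms by (simp add: mvec_spectral_mat orthonormal_expansion[symmetric])

lemma quad_spectral_mat:
  assumes "orthonormal p p w"
  shows "quad p (spectral_mat p w f) x = (\<Sum>j<p. f j * (vdot p (w j) x)\<^sup>2)"
proof -
  have "quad p (spectral_mat p w f) x = vdot p x (\<lambda>i. \<Sum>j<p. (f j * vdot p (w j) x) * w j i)"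
    unfolding quad_eq_vdot_mvec by (rule vdot_cong) (simp_all add: mvec_spectral_mat)
  also have "\<dots> = (\<Sum>j<p. (f j * vdot p (w j) x) * vdot p x (w j))" by (rule vdot_sum_right)
  finally show ?thesis by (simp add: vdot_commute[of p x] power2_eq_square mult_ac)
qed

lemma pos_def_spectral_mat:
  assumes o: "orthonormal p p w" and f_pos: "\<And>j. j < p \<Longrightarrow> 0 < f j"
  shows "pos_def p (spectral_mat p w f)"
  unfolding pos_def_def
proof (intro conjI allI impI)
  show "sym_mat p (spectral_mat p w f)"
    unfolding sym_mat_def spectral_mat_def by (auto simp: mult_ac)
  fix v :: rvec assume "\<exists>i<p. v i \<noteq> 0"
  then have "0 < (\<Sum>j<p. (vdot p (w j) v)\<^sup>2)"
    using vdot_self_pos parseval[OF o] by metis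
  then obtain j where j: "j < p" "vdot p (w j) v \<noteq> 0"
    by (metis (no_types, lifting) lessThan_iff less_irrefl power_zero_numeral sum.neutral)
  have "0 \<le> f l * (vdot p (w l) v)\<^sup>2" if "l < p" for l
    using f_pos[OF that] by simp
  then have "0 < (\<Sum>j<p. f j * (vdot p (w j) v)\<^sup>2)"
    using j f_pos by (intro sum_pos2[of _ j]) auto
  then show "0 < quad p (spectral_mat p w f) v" by (simp add: quad_spectral_mat[OF o])
qed

lemma mvec_eigenbasis:
  assumes e: "eigenbasis p M w lam" and i: "i < p"
  shows "mvec p M x i = mvec p (spectral_mat p w lam) x i"
proof -
  have o: "orthonormal p p w" using e by (simp add: eigenbasis_def)
  have "mvec p M x = mvec p M (\<lambda>i. \<Sum>j<p. vdot p (w j) x * w j i)"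
    by (rule mvec_cong) (rule orthonormal_expansion[OF o])
  then have "mvec p M x i = (\<Sum>j<p. vdot p (w j) x * mvec p M (w j) i)"
    by (simp add: mvec_sum)
  also have "\<dots> = (\<Sum>j<p. (lam j * vdot p (w j) x) * w j i)"
    using e i unfolding eigenbasis_def by (intro sum.cong) auto
  finally show ?thesis using i by (simp add: mvec_spectral_mat)
qed

lemma quad_eigenbasis:
  assumes e: "eigenbasis p M w lam"
  shows "quad p M x = (\<Sum>j<p. lam j * (vdot p (w j) x)\<^sup>2)"
proof -
  have "quad p M x = quad p (spectral_mat p w lam) x"
    unfolding quad_eq_vdot_mvec by (rule vdot_cong) (simp_all add: mvec_eigenbasis[OF e])
  then show ?thesis using e by (simp add: eigenbasis_def quad_spectral_mat)
qed

lemma eigenbasis_pos: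
  assumes "pos_def p M" "eigenbasis p M w lam" "j < p"
  shows "0 < lam j"
proof -
  have o: "orthonormal p p w" using assms(2) by (simp add: eigenbasis_def)
  have "\<exists>i<p. w j i \<noteq> 0"
    using o assms(3) by (intro vdot_self_neq_0D) (simp add: orthonormal_def)
  then have "0 < quad p M (w j)" using assms(1) by (simp add: pos_def_def)
  also have "quad p M (w j) = (\<Sum>l<p. if l = j then lam j else 0)"
    using o assms(3) unfolding quad_eigenbasis[OF assms(2)] orthonormal_def
    by (intro sum.cong) auto
  finally show ?thesis using assms(3) by simp
qed

text \<open>\<^const>\<open>lambda_min\<close> is an infimum of reals, so the eigenvalues must be shown to be
  bounded below (by \<open>-\<Sum>\<^sub>j \<bar>\<lambda>\<^sub>j\<bar>\<close>) before it can be compared with them.\<close>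

lemma quad_ge_lambda_min:
  assumes sym: "sym_mat p G" and c: "c \<le> lambda_min p G"
  shows "c * vdot p v v \<le> quad p G v"
proof -
  obtain w lam where e: "eigenbasis p G w lam" using eigenbasis_exists[OF sym] by blast
  have o: "orthonormal p p w" using e by (simp add: eigenbasis_def)
  define B where "B = (\<Sum>j<p. \<bar>lam j\<bar>)"
  have quad_lower: "d * vdot p x x \<le> quad p G x" if "\<And>j. j < p \<Longrightarrow> d \<le> lam j" for d x
  proof -
    have "d * vdot p x x = (\<Sum>j<p. d * (vdot p (w j) x)\<^sup>2)"
      by (simp add: parseval[OF o] sum_distrib_left)
    also have "\<dots> \<le> quad p G x"
      unfolding quad_eigenbasis[OF e] by (intro sum_mono mult_right_mono) (auto simp: that)
    finally show ?thesis .
  qed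
  have "bdd_below {l. is_eigenvalue p G l}"
  proof (rule bdd_belowI)
    fix l assume "l \<in> {l. is_eigenvalue p G l}"
    then obtain x i where i: "i < p" "x i \<noteq> 0" and x: "\<forall>i<p. mvec p G x i = l * x i"
      unfolding is_eigenvalue_def by blast
    have pos: "0 < vdot p x x" using i by (rule vdot_self_pos)
    have "- B \<le> lam j" if "j < p" for j
      using member_le_sum[of j "{..<p}" "\<lambda>j. \<bar>lam j\<bar>"] that unfolding B_def by auto
    then have "- B * vdot p x x \<le> quad p G x" by (rule quad_lower)
    also have "quad p G x = vdot p x (\<lambda>i. l * x i)"
      unfolding quad_eq_vdot_mvec using x by (intro vdot_cong) auto
    also have "\<dots> = l * vdot p x x" by (rule vdot_scale_right)
    finally show "- B \<le> l" using pos by (simp add: mult_right_le_imp_le)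
  qed
  moreover have "is_eigenvalue p G (lam j)" if "j < p" for j
    using e that vdot_self_neq_0D[of p "w j"]
    unfolding is_eigenvalue_def eigenbasis_def orthonormal_def by auto
  ultimately have "c \<le> lam j" if "j < p" for j
    using c cInf_lower[of "lam j" "{l. is_eigenvalue p G l}"] that unfolding lambda_min_def by force
  then show ?thesis by (rule quad_lower)
qed

lemma mat_eq_if_mvec_eq:
  assumes "mat_on p p A" "mat_on p p B" "\<And>x i. i < p \<Longrightarrow> mvec p A x i = mvec p B x i"
  shows "A = B"
proof (intro ext)
  fix i l
  show "A i l = B i l"
  proof (cases "i < p \<and> l < p")
    case True
    then show ?thesis using assms(3)[of i "idm l"] by (simp add: mvec_idm_right)
  next
    case False
    then show ?thesis using assms(1,2) unfolding mat_on_def by auto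
  qed
qed

lemma mvec_eq_if_eq_on_orthonormal_basis:
  assumes o: "orthonormal p p z"
    and eq: "\<And>k i. k < p \<Longrightarrow> i < p \<Longrightarrow> mvec p A (z k) i = mvec p B (z k) i" and i: "i < p"
  shows "mvec p A x i = mvec p B x i"
proof -
  have "mvec p C x = mvec p C (\<lambda>i. \<Sum>k<p. vdot p (z k) x * z k i)" for C
    by (rule mvec_cong) (rule orthonormal_expansion[OF o])
  then show ?thesis using eq i by (simp add: mvec_sum)
qed

lemma mat_eq_idm_iff_mvec:
  "mat_eq p p A idm \<longleftrightarrow> (\<forall>x. \<forall>i<p. mvec p A x i = x i)"
proof
  assume "mat_eq p p A idm"
  then have "mvec p A x i = (\<Sum>l<p. if l = i then x l else 0)" if "i < p" for x i
    using that unfolding mvec_def mat_eq_def idm_def by (intro sum.cong) auto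
  then show "\<forall>x. \<forall>i<p. mvec p A x i = x i" by simp
next
  assume "\<forall>x. \<forall>i<p. mvec p A x i = x i"
  then show "mat_eq p p A idm"
    unfolding mat_eq_def by (metis mvec_idm_right idm_def)
qed

lemma pos_def_mvec_eq_0D:
  assumes "pos_def p S" "\<And>i. i < p \<Longrightarrow> mvec p S d i = 0" "i < p"
  shows "d i = 0"
proof (rule ccontr)
  assume "d i \<noteq> 0"
  then have "0 < quad p S d" using assms(1,3) unfolding pos_def_def by blast
  moreover have "quad p S d = vdot p d (\<lambda>i. 0)"
    unfolding quad_eq_vdot_mvec by (rule vdot_cong) (use assms(2) in auto)
  ultimately show False by (simp add: vdot_def)
qed

lemma spectral_mat_cong: "(\<And>j. j < p \<Longrightarrow> f j = g j) \<Longrightarrow> spectral_mat p w f = spectral_mat p w g"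
  unfolding spectral_mat_def by (intro ext) auto

lemma mvec_spectral_mat_eigvec:
  assumes e: "eigenbasis p M w lam" and sym: "sym_mat p M"
    and z: "\<And>i. i < p \<Longrightarrow> mvec p M z i = \<nu> * z i" and i: "i < p"
  shows "mvec p (spectral_mat p w (\<lambda>j. g (lam j))) z i = g \<nu> * z i"
proof -
  have o: "orthonormal p p w" using e by (simp add: eigenbasis_def)
  have coeff: "g (lam j) * vdot p (w j) z = g \<nu> * vdot p (w j) z" if j: "j < p" for j
  proof (cases "vdot p (w j) z = 0")
    case False
    have "lam j * vdot p (w j) z = vdot p (mvec p M (w j)) z"
      using e j unfolding eigenbasis_def vdot_scale_left[symmetric] by (intro vdot_cong) auto
    also have "\<dots> = vdot p (w j) (mvec p M z)" by (rule sym_mat_vdot_mvec[OF sym, symmetric])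
    also have "\<dots> = \<nu> * vdot p (w j) z"
      unfolding vdot_scale_right[symmetric] using z by (intro vdot_cong) auto
    finally show ?thesis using False by simp
  qed simp
  then have "mvec p (spectral_mat p w (\<lambda>j. g (lam j))) z i = (\<Sum>j<p. g \<nu> * (vdot p (w j) z * w j i))"
    unfolding mvec_spectral_mat[OF i] by (intro sum.cong refl) (simp add: coeff mult.assoc[symmetric])
  also have "\<dots> = g \<nu> * z i"
    by (simp add: sum_distrib_left[symmetric] orthonormal_expansion[OF o i, symmetric])
  finally show ?thesis .
qed

lemma spectral_inv_sqrt_inverse:
  assumes e: "eigenbasis p Sig w lam" and lam_pos: "\<And>j. j < p \<Longrightarrow> 0 < lam j"
  defines "S \<equiv> spectral_mat p w (\<lambda>j. 1 / sqrt (lam j))"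
  shows "mat_eq p p (mmul p S (mmul p Sig S)) idm"
  unfolding mat_eq_idm_iff_mvec
proof (intro allI impI)
  fix x i assume i: "i < p"
  have o: "orthonormal p p w" using e by (simp add: eigenbasis_def)
  have "mvec p (mmul p S (mmul p Sig S)) x i = mvec p S (mvec p (spectral_mat p w lam) (mvec p S x)) i"
    unfolding mvec_mmul using mvec_eigenbasis[OF e] by (metis mvec_cong)
  also have "\<dots> = mvec p (spectral_mat p w (\<lambda>j. 1 / sqrt (lam j) * (lam j * (1 / sqrt (lam j))))) x i"
    unfolding S_def using o i
    by (simp add: mvec_cong[OF mvec_spectral_mat_comp[OF o]] mvec_spectral_mat_comp)
  also have "spectral_mat p w (\<lambda>j. 1 / sqrt (lam j) * (lam j * (1 / sqrt (lam j)))) = spectral_mat p w (\<lambda>_. 1)"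
    using lam_pos by (intro spectral_mat_cong) (simp add: less_imp_le less_imp_neq[symmetric])
  finally show "mvec p (mmul p S (mmul p Sig S)) x i = x i" using mvec_spectral_mat_1[OF o i] by simp
qed

lemma inv_sqrt_eigvec_imp_eigvec:
  assumes S_pd: "pos_def p S" and S_inv: "mat_eq p p (mmul p S (mmul p Sig S)) idm"
    and z: "\<And>i. i < p \<Longrightarrow> mvec p S z i = \<mu> * z i" and mu: "0 < \<mu>" and i: "i < p"
  shows "mvec p Sig z i = 1 / \<mu>\<^sup>2 * z i"
proof -
  define y where "y = mvec p Sig z"
  have Sz: "mvec p Sig (mvec p S z) = (\<lambda>j. \<mu> * y j)"
    unfolding y_def mvec_scale[symmetric] by (rule mvec_cong) (rule z)
  have zy: "z i = \<mu> * mvec p S y i" if "i < p" for i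
  proof -
    have "z i = mvec p S (mvec p Sig (mvec p S z)) i"
      using S_inv that unfolding mat_eq_idm_iff_mvec mvec_mmul by simp
    then show ?thesis unfolding Sz mvec_scale .
  qed
  have "mvec p S (\<lambda>i. y i - 1 / \<mu>\<^sup>2 * z i) i = 0" if "i < p" for i
  proof -
    have "mvec p S (\<lambda>i. y i - 1 / \<mu>\<^sup>2 * z i) i = mvec p S y i - 1 / \<mu>\<^sup>2 * (\<mu> * z i)"
      unfolding mvec_diff mvec_scale z[OF that] ..
    also have "\<dots> = 0" using zy[OF that] mu by (simp add: power2_eq_square field_simps)
    finally show ?thesis .
  qed
  from pos_def_mvec_eq_0D[OF S_pd this i] show ?thesis by (simp add: y_def)
qed

text \<open>Uniqueness is what gives the \<open>THE\<close> in \<^const>\<open>inv_sqrt\<close> its meaning: every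
  eigenvector of an admissible \<open>S\<close> with eigenvalue \<open>\<mu>\<close> is an eigenvector of \<open>\<Sigma>\<close>
  with eigenvalue \<open>\<mu>\<^sup>-\<^sup>2\<close>.\<close>

lemma inv_sqrt_eq_spectral_mat:
  assumes pd: "pos_def p Sig" and e: "eigenbasis p Sig w lam"
  shows "inv_sqrt p Sig = spectral_mat p w (\<lambda>j. 1 / sqrt (lam j))"
  unfolding inv_sqrt_def
proof (rule the_equality)
  have o: "orthonormal p p w" using e by (simp add: eigenbasis_def)
  have lam_pos: "\<And>j. j < p \<Longrightarrow> 0 < lam j" using eigenbasis_pos[OF pd e] .
  show "mat_on p p (spectral_mat p w (\<lambda>j. 1 / sqrt (lam j))) \<and>
        pos_def p (spectral_mat p w (\<lambda>j. 1 / sqrt (lam j))) \<and>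
        mat_eq p p (mmul p (spectral_mat p w (\<lambda>j. 1 / sqrt (lam j)))
          (mmul p Sig (spectral_mat p w (\<lambda>j. 1 / sqrt (lam j))))) idm"
    using spectral_inv_sqrt_inverse[OF e lam_pos] pos_def_spectral_mat[OF o] lam_pos
    by (simp add: mat_on_def spectral_mat_def)
next
  fix S assume S: "mat_on p p S \<and> pos_def p S \<and> mat_eq p p (mmul p S (mmul p Sig S)) idm"
  then have "sym_mat p S" by (simp add: pos_def_def)
  then obtain z mu where ez: "eigenbasis p S z mu" using eigenbasis_exists by blast
  have sym: "sym_mat p Sig" using pd by (simp add: pos_def_def)
  have basis_eq: "mvec p S (z k) i = mvec p (spectral_mat p w (\<lambda>j. 1 / sqrt (lam j))) (z k) i"
    if k: "k < p" and i: "i < p" for k i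
  proof -
    have mu: "0 < mu k" using eigenbasis_pos[OF _ ez k] S by blast
    have S_zk: "\<And>i. i < p \<Longrightarrow> mvec p S (z k) i = mu k * z k i"
      using ez k by (simp add: eigenbasis_def)
    have "\<And>i. i < p \<Longrightarrow> mvec p Sig (z k) i = 1 / (mu k)\<^sup>2 * z k i"
      using S S_zk mu by (intro inv_sqrt_eigvec_imp_eigvec) auto
    from mvec_spectral_mat_eigvec[OF e sym this i]
    have "mvec p (spectral_mat p w (\<lambda>j. 1 / sqrt (lam j))) (z k) i = 1 / sqrt (1 / (mu k)\<^sup>2) * z k i" .
    then show ?thesis using mu S_zk[OF i] by (simp add: real_sqrt_divide)
  qed
  have oz: "orthonormal p p z" using ez by (simp add: eigenbasis_def)
  have "mvec p S x i = mvec p (spectral_mat p w (\<lambda>j. 1 / sqrt (lam j))) x i" if "i < p" for x i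
    using basis_eq that by (rule mvec_eq_if_eq_on_orthonormal_basis[OF oz])
  moreover have "mat_on p p (spectral_mat p w (\<lambda>j. 1 / sqrt (lam j)))"
    by (simp add: mat_on_def spectral_mat_def)
  ultimately show "S = spectral_mat p w (\<lambda>j. 1 / sqrt (lam j))"
    using S by (intro mat_eq_if_mvec_eq) auto
qed

lemma inv_sqrt_preimage:
  assumes pd: "pos_def p Sig"
  shows "\<exists>v. (\<forall>i<p. mvec p (inv_sqrt p Sig) v i = y i) \<and> vdot p v v = quad p Sig y"
proof -
  have "sym_mat p Sig" using pd by (simp add: pos_def_def)
  then obtain w lam where e: "eigenbasis p Sig w lam" using eigenbasis_exists by blast
  have o: "orthonormal p p w" using e by (simp add: eigenbasis_def)
  have lam_pos: "\<And>j. j < p \<Longrightarrow> 0 < lam j" using eigenbasis_pos[OF pd e] .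
  define v where "v = mvec p (spectral_mat p w (\<lambda>j. sqrt (lam j))) y"
  have "mvec p (inv_sqrt p Sig) v i = y i" if i: "i < p" for i
  proof -
    have "spectral_mat p w (\<lambda>j. 1 / sqrt (lam j) * sqrt (lam j)) = spectral_mat p w (\<lambda>_. 1)"
      using lam_pos by (intro spectral_mat_cong) (simp add: less_imp_neq[symmetric])
    then show ?thesis
      unfolding inv_sqrt_eq_spectral_mat[OF pd e] v_def mvec_spectral_mat_comp[OF o i]
      using mvec_spectral_mat_1[OF o i] by simp
  qed
  moreover have "vdot p v v = quad p Sig y"
  proof -
    have "vdot p v v = (\<Sum>j<p. (vdot p (w j) v)\<^sup>2)" by (rule parseval[OF o])
    also have "\<dots> = (\<Sum>j<p. (sqrt (lam j) * vdot p (w j) y)\<^sup>2)"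
      unfolding v_def by (simp add: vdot_mvec_spectral_mat[OF o])
    also have "\<dots> = quad p Sig y"
      unfolding quad_eigenbasis[OF e] using lam_pos
      by (intro sum.cong) (simp_all add: power_mult_distrib less_imp_le)
    finally show ?thesis .
  qed
  ultimately show ?thesis by blast
qed

section \<open>Hessian of the multinomial logistic loss\<close>

lemma mvec_upd_add: "b < K \<Longrightarrow> mvec K Q (u(b := u b + s)) k = mvec K Q u k + s * Q k b"
proof -
  assume b: "b < K"
  have "mvec K Q (u(b := u b + s)) k = (\<Sum>l<K. Q k l * u l + (if l = b then s * Q k b else 0))"
    unfolding mvec_def by (intro sum.cong) (auto simp: algebra_simps)
  also have "\<dots> = mvec K Q u k + s * Q k b" using b by (simp add: sum.distrib mvec_def)
  finally show ?thesis .
qed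

lemma has_real_derivative_sum_exp:
  "((\<lambda>s. \<Sum>k<m. exp (z k + s * q k) * c k) has_real_derivative (\<Sum>k<m. exp (z k) * q k * c k)) (at 0)"
  by (rule DERIV_sum) (auto intro!: derivative_eq_intros)

definition mlloss_grad :: "nat \<Rightarrow> nat \<Rightarrow> rmat \<Rightarrow> rvec \<Rightarrow> rvec \<Rightarrow> nat \<Rightarrow> real" where
  "mlloss_grad m K Q y u b = - (\<Sum>k<m. y k * Q k b) +
     (\<Sum>k<m. exp (mvec K Q u k) * Q k b) / (\<Sum>k<m. exp (mvec K Q u k))"

definition mlloss_hess :: "nat \<Rightarrow> nat \<Rightarrow> rmat \<Rightarrow> rvec \<Rightarrow> rmat" where
  "mlloss_hess m K Q u = (\<lambda>a b.
     ((\<Sum>k<m. exp (mvec K Q u k) * Q k a * Q k b) * (\<Sum>k<m. exp (mvec K Q u k))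
      - (\<Sum>k<m. exp (mvec K Q u k) * Q k b) * (\<Sum>k<m. exp (mvec K Q u k) * Q k a))
     / ((\<Sum>k<m. exp (mvec K Q u k)) * (\<Sum>k<m. exp (mvec K Q u k))))"

lemma partial_mlloss:
  assumes b: "b < K" and m: "0 < m"
  shows "partial (\<lambda>u. mlloss m y (mvec K Q u)) b u = mlloss_grad m K Q y u b"
proof -
  define z where "z = mvec K Q u"
  have f_eq: "(\<lambda>s. mlloss m y (mvec K Q (u(b := u b + s)))) =
     (\<lambda>s. - (\<Sum>k<m. y k * (z k + s * Q k b)) + ln (\<Sum>k<m. exp (z k + s * Q k b) * 1))"
    unfolding mlloss_def z_def by (simp add: mvec_upd_add[OF b])
  have "0 < (\<Sum>k<m. exp (z k))" using m by (intro sum_pos) auto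
  have d1: "((\<lambda>s. \<Sum>k<m. y k * (z k + s * Q k b)) has_real_derivative (\<Sum>k<m. y k * Q k b)) (at 0)"
    by (rule DERIV_sum) (auto intro!: derivative_eq_intros)
  have d2: "((\<lambda>s. ln (\<Sum>k<m. exp (z k + s * Q k b) * 1)) has_real_derivative
      1 / (\<Sum>k<m. exp (z k + 0 * Q k b) * 1) * (\<Sum>k<m. exp (z k) * Q k b * 1)) (at 0)"
    by (rule DERIV_chain2[OF DERIV_ln_divide has_real_derivative_sum_exp])
       (use \<open>0 < (\<Sum>k<m. exp (z k))\<close> in simp)
  have "((\<lambda>s. mlloss m y (mvec K Q (u(b := u b + s)))) has_real_derivative mlloss_grad m K Q y u b) (at 0)"
    using DERIV_add[OF DERIV_minus[OF d1] d2] unfolding f_eq mlloss_grad_def z_def by simp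
  then show ?thesis unfolding partial_def by (rule DERIV_imp_deriv)
qed

lemma hessian_mlloss:
  assumes a: "a < K" and b: "b < K" and m: "0 < m"
  shows "hessian (\<lambda>u. mlloss m y (mvec K Q u)) u a b = mlloss_hess m K Q u a b"
proof -
  define z where "z = mvec K Q u"
  have f_eq: "(\<lambda>s. mlloss_grad m K Q y (u(a := u a + s)) b) =
     (\<lambda>s. - (\<Sum>k<m. y k * Q k b) +
        (\<Sum>k<m. exp (z k + s * Q k a) * Q k b) / (\<Sum>k<m. exp (z k + s * Q k a) * 1))"
    unfolding mlloss_grad_def z_def by (simp add: mvec_upd_add[OF a])
  have "0 < (\<Sum>k<m. exp (z k + 0 * Q k a) * 1)" using m by (intro sum_pos) auto
  then have "((\<lambda>s. (\<Sum>k<m. exp (z k + s * Q k a) * Q k b) / (\<Sum>k<m. exp (z k + s * Q k a) * 1))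
     has_real_derivative
       ((\<Sum>k<m. exp (z k) * Q k a * Q k b) * (\<Sum>k<m. exp (z k + 0 * Q k a) * 1)
        - (\<Sum>k<m. exp (z k + 0 * Q k a) * Q k b) * (\<Sum>k<m. exp (z k) * Q k a * 1))
       / ((\<Sum>k<m. exp (z k + 0 * Q k a) * 1) * (\<Sum>k<m. exp (z k + 0 * Q k a) * 1))) (at 0)"
    by (intro DERIV_divide has_real_derivative_sum_exp) simp
  from DERIV_add[OF DERIV_const[of "- (\<Sum>k<m. y k * Q k b)"] this]
  have "((\<lambda>s. mlloss_grad m K Q y (u(a := u a + s)) b) has_real_derivative mlloss_hess m K Q u a b) (at 0)"
    unfolding f_eq mlloss_hess_def z_def by simp
  moreover have "hessian (\<lambda>u. mlloss m y (mvec K Q u)) u a b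
      = deriv (\<lambda>s. mlloss_grad m K Q y (u(a := u a + s)) b) 0"
    unfolding hessian_def partial_mlloss[OF b m] by (simp add: partial_def)
  ultimately show ?thesis by (simp add: DERIV_imp_deriv)
qed

text \<open>The variance of \<open>g\<close> under the probability weights proportional to \<open>E\<close>;
  for \<open>E = exp \<circ> z\<close> these are the softmax probabilities of the scores \<open>z\<close>.\<close>

definition weighted_var :: "nat \<Rightarrow> (nat \<Rightarrow> real) \<Rightarrow> (nat \<Rightarrow> real) \<Rightarrow> real" where
  "weighted_var m E g =
     ((\<Sum>k<m. E k * (g k)\<^sup>2) * (\<Sum>k<m. E k) - (\<Sum>k<m. E k * g k)\<^sup>2) / (\<Sum>k<m. E k)\<^sup>2"

lemma weighted_var_numerator_pairwise:
  fixes E g :: "nat \<Rightarrow> real"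
  shows "2 * ((\<Sum>k<m. E k * (g k)\<^sup>2) * (\<Sum>k<m. E k) - (\<Sum>k<m. E k * g k)\<^sup>2)
           = (\<Sum>k<m. \<Sum>l<m. E k * E l * (g k - g l)\<^sup>2)"
proof -
  have "(\<Sum>k<m. \<Sum>l<m. E k * E l * (g k - g l)\<^sup>2) =
      (\<Sum>k<m. \<Sum>l<m. E k * (g k)\<^sup>2 * E l) + (\<Sum>k<m. \<Sum>l<m. E l * (g l)\<^sup>2 * E k)
      - 2 * (\<Sum>k<m. \<Sum>l<m. (E k * g k) * (E l * g l))"
    by (simp add: power2_diff sum.distrib sum_subtractf sum_distrib_left algebra_simps)
  also have "(\<Sum>k<m. \<Sum>l<m. E l * (g l)\<^sup>2 * E k) = (\<Sum>k<m. \<Sum>l<m. E k * (g k)\<^sup>2 * E l)"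
    by (rule sum.swap)
  finally show ?thesis by (simp add: sum_product power2_eq_square)
qed

lemma weighted_var_nonneg:
  assumes "\<And>k. k < m \<Longrightarrow> 0 \<le> E k"
  shows "0 \<le> weighted_var m E g"
proof -
  have "0 \<le> (\<Sum>k<m. \<Sum>l<m. E k * E l * (g k - g l)\<^sup>2)"
    using assms by (intro sum_nonneg) auto
  then show ?thesis
    unfolding weighted_var_def weighted_var_numerator_pairwise[symmetric] by simp
qed

lemma weighted_var_ge:
  fixes E g :: "nat \<Rightarrow> real"
  assumes m: "0 < m" and e1: "0 < e1"
    and E_bounds: "\<And>k. k < m \<Longrightarrow> e1 \<le> E k \<and> E k \<le> e2" and g_sum: "(\<Sum>k<m. g k) = 0"
  shows "(e1 / e2)\<^sup>2 / m * (\<Sum>k<m. (g k)\<^sup>2) \<le> weighted_var m E g"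
proof -
  define num where "num = (\<Sum>k<m. E k * (g k)\<^sup>2) * (\<Sum>k<m. E k) - (\<Sum>k<m. E k * g k)\<^sup>2"
  define D where "D = (\<Sum>k<m. E k)"
  have e2: "0 < e2" using E_bounds[OF m] e1 by linarith
  have "e1\<^sup>2 * (\<Sum>k<m. \<Sum>l<m. (g k - g l)\<^sup>2) \<le> (\<Sum>k<m. \<Sum>l<m. E k * E l * (g k - g l)\<^sup>2)"
    unfolding sum_distrib_left
  proof (intro sum_mono)
    fix k l assume "k \<in> {..<m}" "l \<in> {..<m}"
    then have "e1 * e1 \<le> E k * E l" using E_bounds[of k] E_bounds[of l] e1 by (intro mult_mono) auto
    then show "e1\<^sup>2 * (g k - g l)\<^sup>2 \<le> E k * E l * (g k - g l)\<^sup>2"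
      by (simp add: power2_eq_square mult_right_mono)
  qed
  also have "(\<Sum>k<m. \<Sum>l<m. (g k - g l)\<^sup>2) = 2 * (real m * (\<Sum>k<m. (g k)\<^sup>2))"
    using weighted_var_numerator_pairwise[of "\<lambda>_. 1" g m] g_sum by (simp add: mult.commute)
  finally have num_ge: "e1\<^sup>2 * real m * (\<Sum>k<m. (g k)\<^sup>2) \<le> num"
    unfolding num_def weighted_var_numerator_pairwise[symmetric] by (simp add: mult_ac)
  have "0 < D" unfolding D_def using m E_bounds e1 by (intro sum_pos) force+
  moreover have "D \<le> real m * e2"
    unfolding D_def using sum_mono[of "{..<m}" E "\<lambda>_. e2"] E_bounds by simp
  ultimately have "D\<^sup>2 \<le> (real m * e2)\<^sup>2" by (intro power_mono) auto
  have "(e1 / e2)\<^sup>2 / m * (\<Sum>k<m. (g k)\<^sup>2) = e1\<^sup>2 * real m * (\<Sum>k<m. (g k)\<^sup>2) / (real m * e2)\<^sup>2"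
    using m e2 by (simp add: field_simps power2_eq_square)
  also have "\<dots> \<le> num / D\<^sup>2"
  proof (rule frac_le)
    show "0 \<le> num" using num_ge by (smt (verit) mult_nonneg_nonneg of_nat_0_le_iff sum_nonneg zero_le_power2)
  qed (use num_ge \<open>0 < D\<close> \<open>D\<^sup>2 \<le> (real m * e2)\<^sup>2\<close> in auto)
  finally show ?thesis unfolding weighted_var_def num_def D_def .
qed

lemma quad_mlloss_hess:
  "quad K (mlloss_hess m K Q u) w = weighted_var m (\<lambda>k. exp (mvec K Q u k)) (mvec K Q w)"
proof -
  define E where "E = (\<lambda>k. exp (mvec K Q u k))"
  define D where "D = (\<Sum>k<m. E k)"
  define T where "T = (\<lambda>a b. \<Sum>k<m. E k * Q k a * Q k b)"
  define N where "N = (\<lambda>a. \<Sum>k<m. E k * Q k a)"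
  have H: "mlloss_hess m K Q u = (\<lambda>a b. (T a b * D - N b * N a) / (D * D))"
    unfolding mlloss_hess_def T_def N_def D_def E_def ..
  have "quad K (mlloss_hess m K Q u) w
      = (\<Sum>a<K. \<Sum>b<K. (w a * w b * T a b * D - (w a * N a) * (w b * N b)) / (D * D))"
    unfolding quad_def H by (intro sum.cong refl) (simp add: field_simps)
  also have "\<dots> = ((\<Sum>a<K. \<Sum>b<K. w a * w b * T a b) * D
      - (\<Sum>a<K. \<Sum>b<K. (w a * N a) * (w b * N b))) / (D * D)"
    by (simp add: sum_divide_distrib[symmetric] sum_subtractf sum_distrib_right)
  also have "(\<Sum>a<K. \<Sum>b<K. (w a * N a) * (w b * N b)) = (\<Sum>a<K. w a * N a) * (\<Sum>b<K. w b * N b)"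
    by (simp add: sum_product)
  also have "(\<Sum>a<K. \<Sum>b<K. w a * w b * T a b) = (\<Sum>k<m. E k * (mvec K Q w k)\<^sup>2)"
    unfolding T_def mvec_def power2_eq_square sum_product sum_distrib_left
    by (subst sum.swap, rule sum.cong[OF refl], subst sum.swap) (simp add: sum_distrib_left mult_ac)
  also have "(\<Sum>a<K. w a * N a) = (\<Sum>k<m. E k * mvec K Q w k)"
    unfolding N_def mvec_def sum_distrib_left by (subst sum.swap) (simp add: mult_ac)
  finally show ?thesis
    unfolding weighted_var_def D_def E_def by (simp add: power2_eq_square)
qed

lemma quad_cong_entries:
  "(\<And>a b. a < n \<Longrightarrow> b < n \<Longrightarrow> A a b = B a b) \<Longrightarrow> quad n A v = quad n B v"
  unfolding quad_def by (intro sum.cong refl) auto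

lemma quad_hessian_mlloss:
  assumes "0 < m"
  shows "quad K (hessian (\<lambda>u. mlloss m y (mvec K Q u)) u) w
           = weighted_var m (\<lambda>k. exp (mvec K Q u k)) (mvec K Q w)"
  using assms by (simp add: quad_cong_entries[OF hessian_mlloss] quad_mlloss_hess)

lemma quad_hessian_mlloss_nonneg: "0 < m \<Longrightarrow> 0 \<le> quad K (hessian (\<lambda>u. mlloss m y (mvec K Q u)) u) w"
  by (simp add: quad_hessian_mlloss weighted_var_nonneg)

lemma centering_factor_col_sum:
  assumes QQ: "mat_eq (K+1) (K+1) (mmul K Q (transp Q)) (centering (K+1))" and a: "a < K"
  shows "(\<Sum>k<K+1. Q k a) = 0"
proof -
  have "(\<Sum>b<K. (\<Sum>k<K+1. Q k b)\<^sup>2) = (\<Sum>k<K+1. \<Sum>l<K+1. \<Sum>b<K. Q k b * Q l b)"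
    unfolding power2_eq_square sum_product by (subst sum.swap) (simp add: sum.swap[of _ "{..<K}"])
  also have "\<dots> = (\<Sum>k<K+1. \<Sum>l<K+1. idm k l - 1 / real (K+1))"
    using QQ unfolding mat_eq_def mmul_def transp_def centering_def by (intro sum.cong refl) auto
  also have "\<dots> = 0"
    by (simp add: sum_subtractf sum.distrib idm_def del: sum.lessThan_Suc)
  finally have "(\<Sum>b<K. (\<Sum>k<K+1. Q k b)\<^sup>2) = 0" .
  then show ?thesis using a by (subst (asm) sum_nonneg_eq_0_iff) auto
qed

lemma sum_sq_mvec_isometry:
  assumes QtQ: "mat_eq K K (mmul m (transp Q) Q) idm"
  shows "(\<Sum>k<m. (mvec K Q w k)\<^sup>2) = (\<Sum>a<K. (w a)\<^sup>2)"
proof -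
  have "(\<Sum>k<m. (mvec K Q w k)\<^sup>2) = (\<Sum>k<m. \<Sum>a<K. \<Sum>b<K. Q k a * Q k b * w a * w b)"
    unfolding mvec_def by (simp add: power2_eq_square sum_product mult_ac)
  also have "\<dots> = (\<Sum>a<K. \<Sum>k<m. \<Sum>b<K. Q k a * Q k b * w a * w b)" by (rule sum.swap)
  also have "\<dots> = (\<Sum>a<K. \<Sum>b<K. \<Sum>k<m. Q k a * Q k b * w a * w b)"
    by (rule sum.cong[OF refl]) (rule sum.swap)
  also have "\<dots> = (\<Sum>a<K. \<Sum>b<K. w a * w b * (\<Sum>k<m. Q k a * Q k b))"
    by (simp add: sum_distrib_left mult_ac)
  also have "\<dots> = (\<Sum>a<K. \<Sum>b<K. if b = a then w a * w a else 0)"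
    using QtQ unfolding mat_eq_def mmul_def transp_def idm_def by (intro sum.cong refl) auto
  finally show ?thesis by (simp add: power2_eq_square)
qed

lemma quad_hessian_mlloss_ge:
  assumes QQ: "mat_eq (K+1) (K+1) (mmul K Q (transp Q)) (centering (K+1))"
    and QtQ: "mat_eq K K (mmul (K+1) (transp Q) Q) idm"
    and scores: "\<And>k. k < K+1 \<Longrightarrow> \<bar>mvec K Q u k\<bar> \<le> R"
  shows "exp (-4 * R) / real (K+1) * (\<Sum>a<K. (w a)\<^sup>2)
           \<le> quad K (hessian (\<lambda>u. mlloss (K+1) y (mvec K Q u)) u) w"
proof -
  have "(\<Sum>k<K+1. mvec K Q w k) = (\<Sum>a<K. w a * (\<Sum>k<K+1. Q k a))"
    unfolding mvec_def sum_distrib_left by (subst sum.swap) (simp add: mult_ac)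
  also have "\<dots> = 0" using centering_factor_col_sum[OF QQ] by simp
  finally have "(\<Sum>k<K+1. mvec K Q w k) = 0" .
  moreover have "exp (- R) \<le> exp (mvec K Q u k) \<and> exp (mvec K Q u k) \<le> exp R" if "k < K+1" for k
    using scores[OF that] by (simp add: abs_le_iff)
  ultimately have "(exp (- R) / exp R)\<^sup>2 / real (K+1) * (\<Sum>k<K+1. (mvec K Q w k)\<^sup>2)
      \<le> weighted_var (K+1) (\<lambda>k. exp (mvec K Q u k)) (mvec K Q w)"
    by (intro weighted_var_ge) auto
  moreover have "(exp (- R) / exp R)\<^sup>2 = exp (-4 * R)"
    by (simp add: power2_eq_square flip: exp_diff exp_add)
  moreover have "(\<Sum>k<K+1. (mvec K Q w k)\<^sup>2) = (\<Sum>a<K. (w a)\<^sup>2)"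
    by (rule sum_sq_mvec_isometry[OF QtQ])
  moreover have "quad K (hessian (\<lambda>u. mlloss (K+1) y (mvec K Q u)) u) w
      = weighted_var (K+1) (\<lambda>k. exp (mvec K Q u k)) (mvec K Q w)"
    by (rule quad_hessian_mlloss) simp
  ultimately show ?thesis by (simp only:)
qed

lemma mvec_centering_factor_scores:
  assumes QQ: "mat_eq (K+1) (K+1) (mmul K Q (transp Q)) (centering (K+1))" and k: "k < K+1"
  shows "mvec K Q (mvec p (transp (mmul (K+1) B Q)) (X i)) k
           = mmul (K+1) (mmul p X B) (centering (K+1)) i k"
proof -
  define x where "x = X i"
  have "mvec K Q (mvec p (transp (mmul (K+1) B Q)) x) k =
      (\<Sum>l<K. \<Sum>r<p. \<Sum>j<K+1. Q k l * B r j * Q j l * x r)"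
    unfolding mvec_def transp_def mmul_def
    by (simp add: sum_distrib_left sum_distrib_right mult_ac del: sum.lessThan_Suc)
  also have "\<dots> = (\<Sum>l<K. \<Sum>j<K+1. \<Sum>r<p. Q k l * B r j * Q j l * x r)"
    by (rule sum.cong[OF refl]) (rule sum.swap)
  also have "\<dots> = (\<Sum>j<K+1. \<Sum>l<K. \<Sum>r<p. Q k l * B r j * Q j l * x r)" by (rule sum.swap)
  also have "\<dots> = (\<Sum>j<K+1. (\<Sum>l<K. Q k l * Q j l) * (\<Sum>r<p. x r * B r j))"
    by (simp add: sum_distrib_left sum_distrib_right mult_ac del: sum.lessThan_Suc)
  also have "\<dots> = (\<Sum>j<K+1. (\<Sum>r<p. x r * B r j) * centering (K+1) j k)"
    using QQ k unfolding mat_eq_def mmul_def transp_def centering_def idm_def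
    by (intro sum.cong refl) (auto simp: mult.commute)
  also have "\<dots> = mmul (K+1) (mmul p X B) (centering (K+1)) i k"
    unfolding mmul_def x_def ..
  finally show ?thesis unfolding x_def .
qed

section \<open>Kronecker quadratic forms and restricted Gram matrices\<close>

lemma quad_msub: "quad n (msub A B) v = quad n A v - quad n B v"
  unfolding quad_def msub_def by (simp add: sum_subtractf algebra_simps)

lemma quad_mscale: "quad n (mscale c A) v = c * quad n A v"
  unfolding quad_def mscale_def by (simp add: sum_distrib_left mult_ac)

lemma quad_sum_mat: "quad n (\<lambda>r s. \<Sum>i<m. A i r s) v = (\<Sum>i<m. quad n (A i) v)"
proof -
  have "quad n (\<lambda>r s. \<Sum>i<m. A i r s) v = (\<Sum>r<n. \<Sum>s<n. \<Sum>i<m. v r * A i r s * v s)"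
    unfolding quad_def by (simp add: sum_distrib_left sum_distrib_right)
  also have "\<dots> = (\<Sum>r<n. \<Sum>i<m. \<Sum>s<n. v r * A i r s * v s)"
    by (rule sum.cong[OF refl]) (rule sum.swap)
  also have "\<dots> = (\<Sum>i<m. \<Sum>r<n. \<Sum>s<n. v r * A i r s * v s)" by (rule sum.swap)
  finally show ?thesis unfolding quad_def .
qed

definition kron_block :: "nat \<Rightarrow> rvec \<Rightarrow> nat \<Rightarrow> rvec" where
  "kron_block p v a = (\<lambda>t. v (t + a * p))"

lemma quad_kron:
  "quad (K * p) (kron p A B) v =
     (\<Sum>a<K. \<Sum>b<K. A a b * (\<Sum>t<p. \<Sum>t'<p. kron_block p v a t * B t t' * kron_block p v b t'))"
proof -
  have "quad (K * p) (kron p A B) v =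
     (\<Sum>a<K. \<Sum>t<p. \<Sum>b<K. \<Sum>t'<p. v (t + a * p) * kron p A B (t + a * p) (t' + b * p) * v (t' + b * p))"
    unfolding quad_def sum_mult_product ..
  also have "\<dots> = (\<Sum>a<K. \<Sum>t<p. \<Sum>b<K. \<Sum>t'<p. A a b * (v (t + a * p) * B t t' * v (t' + b * p)))"
    by (intro sum.cong refl) (simp add: kron_def mult_ac)
  also have "\<dots> = (\<Sum>a<K. \<Sum>b<K. \<Sum>t<p. \<Sum>t'<p. A a b * (v (t + a * p) * B t t' * v (t' + b * p)))"
    by (rule sum.cong[OF refl]) (rule sum.swap)
  finally show ?thesis by (simp add: sum_distrib_left kron_block_def)
qed

lemma quad_kron_rank1:
  "quad (K * p) (kron p H (\<lambda>a b. x a * x b)) v = quad K H (\<lambda>a. vdot p x (kron_block p v a))"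
  unfolding quad_kron unfolding quad_def vdot_def
  by (intro sum.cong refl) (simp add: sum_product mult_ac)

lemma quad_kron_idm: "quad (K * p) (kron p idm S) v = (\<Sum>a<K. quad p S (kron_block p v a))"
  unfolding quad_kron
proof (rule sum.cong[OF refl])
  fix a assume "a \<in> {..<K}"
  have "(\<Sum>b<K. idm a b * (\<Sum>t<p. \<Sum>t'<p. kron_block p v a t * S t t' * kron_block p v b t'))
      = (\<Sum>b<K. if b = a then quad p S (kron_block p v a) else 0)"
    by (intro sum.cong refl) (auto simp: idm_def quad_def)
  then show "(\<Sum>b<K. idm a b * (\<Sum>t<p. \<Sum>t'<p. kron_block p v a t * S t t' * kron_block p v b t'))
      = quad p S (kron_block p v a)"
    using \<open>a \<in> {..<K}\<close> by simp
qed

lemma loewner_ge_kron_gram: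
  fixes H :: "nat \<Rightarrow> rmat" and X :: rmat
  assumes n: "0 < n" and I: "I \<subseteq> {..<n}" and c: "0 \<le> c"
    and H_psd: "\<And>i w. i < n \<Longrightarrow> 0 \<le> quad K (H i) w"
    and H_ge: "\<And>i w. i \<in> I \<Longrightarrow> c * (\<Sum>a<K. (w a)\<^sup>2) \<le> quad K (H i) w"
    and X_ge: "\<And>y. real n * d * quad p S y \<le> (\<Sum>i\<in>I. (vdot p (X i) y)\<^sup>2)"
  shows "loewner_ge (K * p) (mscale (1 / real n) (\<lambda>r s. \<Sum>i<n. kron p (H i) (\<lambda>a b. X i a * X i b) r s))
           (mscale (c * d) (kron p idm S))"
  unfolding loewner_ge_def psd_def quad_msub quad_mscale quad_sum_mat quad_kron_rank1 quad_kron_idm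
proof
  fix v
  define W where "W = (\<lambda>i a. vdot p (X i) (kron_block p v a))"
  have "real n * d * (\<Sum>a<K. quad p S (kron_block p v a)) \<le> (\<Sum>a<K. \<Sum>i\<in>I. (W i a)\<^sup>2)"
    unfolding sum_distrib_left W_def by (intro sum_mono X_ge)
  then have "c * (real n * d * (\<Sum>a<K. quad p S (kron_block p v a)))
      \<le> c * (\<Sum>a<K. \<Sum>i\<in>I. (W i a)\<^sup>2)"
    using c by (rule mult_left_mono)
  also have "\<dots> = (\<Sum>i\<in>I. c * (\<Sum>a<K. (W i a)\<^sup>2))"
    by (simp add: sum_distrib_left sum.swap[of _ I])
  also have "\<dots> \<le> (\<Sum>i\<in>I. quad K (H i) (W i))" by (intro sum_mono H_ge)
  also have "\<dots> \<le> (\<Sum>i<n. quad K (H i) (W i))"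
    using I H_psd by (intro sum_mono2) auto
  finally show "0 \<le> 1 / real n * (\<Sum>i<n. quad K (H i) (W i)) - c * d * (\<Sum>a<K. quad p S (kron_block p v a))"
    using n by (simp add: field_simps)
qed

lemma mvec_mscale: "mvec q (mscale c A) v = (\<lambda>i. c * mvec q A v i)"
  unfolding mvec_def mscale_def by (simp add: sum_distrib_left mult_ac)

text \<open>\<open>(1/n) S X\<^sup>T P\<^sub>I X S\<close>; for \<open>S = \<Sigma>\<^sup>-\<^sup>1\<^sup>/\<^sup>2\<close> these are the matrices
  constrained in the definition of \<open>U\<^sub>x\<close>.\<close>

definition restricted_gram :: "nat \<Rightarrow> nat \<Rightarrow> rmat \<Rightarrow> rmat \<Rightarrow> nat set \<Rightarrow> rmat" where
  "restricted_gram n p S X I =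
     mscale (1 / real n) (mmul p S (mmul n (transp X) (mmul n (projI I) (mmul p X S))))"

lemma vdot_mvec_restricted_gram:
  assumes I: "I \<subseteq> {..<n}" and S: "sym_mat p S"
  shows "vdot p u (mvec p (restricted_gram n p S X I) v) =
    1 / real n * (\<Sum>j\<in>I. vdot p (X j) (mvec p S u) * vdot p (X j) (mvec p S v))"
proof -
  define b where "b = mvec n (projI I) (mvec p X (mvec p S v))"
  have b: "b j = (if j \<in> I then vdot p (X j) (mvec p S v) else 0)" if "j < n" for j
  proof -
    have "b j = (\<Sum>k<n. if k = j then (if j \<in> I then vdot p (X j) (mvec p S v) else 0) else 0)"
      unfolding b_def mvec_def projI_def vdot_def by (intro sum.cong refl) auto
    then show ?thesis using that by simp
  qed
  have "mvec p (restricted_gram n p S X I) v = (\<lambda>t. 1 / real n * mvec p S (mvec n (transp X) b) t)"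
    unfolding restricted_gram_def mvec_mscale mvec_mmul b_def ..
  then have "vdot p u (mvec p (restricted_gram n p S X I) v)
      = 1 / real n * vdot p u (mvec p S (mvec n (transp X) b))"
    by (simp only: vdot_scale_right)
  also have "vdot p u (mvec p S (mvec n (transp X) b)) = vdot p (mvec p S u) (mvec n (transp X) b)"
    by (rule sym_mat_vdot_mvec[OF S])
  also have "\<dots> = (\<Sum>j<n. b j * vdot p (X j) (mvec p S u))"
    unfolding vdot_def mvec_def transp_def sum_distrib_left
    by (subst sum.swap) (simp add: sum_distrib_left mult_ac)
  also have "\<dots> = (\<Sum>j<n. if j \<in> I then vdot p (X j) (mvec p S u) * vdot p (X j) (mvec p S v) else 0)"
    using b by (intro sum.cong) auto
  also have "\<dots> = (\<Sum>j\<in>I. vdot p (X j) (mvec p S u) * vdot p (X j) (mvec p S v))"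
    using I by (simp add: sum.inter_restrict[symmetric] Int_absorb1)
  finally show ?thesis .
qed

lemma sym_mat_inv_sqrt:
  assumes pd: "pos_def p Sig"
  shows "sym_mat p (inv_sqrt p Sig)"
proof -
  have "sym_mat p Sig" using pd by (simp add: pos_def_def)
  then obtain w lam where e: "eigenbasis p Sig w lam" using eigenbasis_exists by blast
  then have "pos_def p (spectral_mat p w (\<lambda>j. 1 / sqrt (lam j)))"
    using eigenbasis_pos[OF pd e] by (intro pos_def_spectral_mat) (simp_all add: eigenbasis_def)
  then show ?thesis by (simp add: inv_sqrt_eq_spectral_mat[OF pd e] pos_def_def)
qed

lemma sum_sq_rows_ge_lambda_min:
  assumes pd: "pos_def p Sig" and I: "I \<subseteq> {..<n}" and n: "0 < n"
    and c: "c \<le> lambda_min p (restricted_gram n p (inv_sqrt p Sig) X I)"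
  shows "real n * c * quad p Sig y \<le> (\<Sum>i\<in>I. (vdot p (X i) y)\<^sup>2)"
proof -
  let ?S = "inv_sqrt p Sig"
  have S: "sym_mat p ?S" by (rule sym_mat_inv_sqrt[OF pd])
  obtain v where v: "\<forall>i<p. mvec p ?S v i = y i" and v_norm: "vdot p v v = quad p Sig y"
    using inv_sqrt_preimage[OF pd] by blast
  have "sym_mat p (restricted_gram n p ?S X I)"
    by (intro sym_mat_if_vdot_mvec_commute) (simp add: vdot_mvec_restricted_gram[OF I S] mult.commute)
  from quad_ge_lambda_min[OF this c, of v]
  have "c * quad p Sig y \<le> quad p (restricted_gram n p ?S X I) v" by (simp only: v_norm)
  also have "\<dots> = 1 / real n * (\<Sum>i\<in>I. (vdot p (X i) (mvec p ?S v))\<^sup>2)"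
    by (simp add: quad_eq_vdot_mvec vdot_mvec_restricted_gram[OF I S] power2_eq_square)
  also have "(\<Sum>i\<in>I. (vdot p (X i) (mvec p ?S v))\<^sup>2) = (\<Sum>i\<in>I. (vdot p (X i) y)\<^sup>2)"
    using v by (intro sum.cong refl arg_cong[where f = "\<lambda>t. t\<^sup>2"] vdot_cong) auto
  finally show ?thesis using n by (simp add: field_simps)
qed

lemma card_below_threshold_ge:
  fixes f :: "nat \<Rightarrow> real"
  assumes f_nonneg: "\<And>i. i < n \<Longrightarrow> 0 \<le> f i" and total: "(\<Sum>i<n. f i) < real n * tau"
    and alpha: "0 < alpha"
  shows "nat \<lceil>real n * (1 - alpha)\<rceil> \<le> card {i. i < n \<and> f i < tau / alpha}"
proof -
  define G where "G = {i. i < n \<and> f i < tau / alpha}"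
  define B where "B = {i. i < n \<and> \<not> f i < tau / alpha}"
  have "0 \<le> (\<Sum>i<n. f i)" using f_nonneg by (intro sum_nonneg) auto
  then have "0 < real n * tau" using total by linarith
  then have "0 < tau" by (simp add: zero_less_mult_iff)
  have "G \<union> B = {..<n}" "G \<inter> B = {}" unfolding G_def B_def by auto
  then have card_GB: "card G + card B = n"
    using card_Un_disjoint[of G B] unfolding G_def B_def by simp
  have "real (card B) * (tau / alpha) = (\<Sum>i\<in>B. tau / alpha)" by simp
  also have "\<dots> \<le> (\<Sum>i\<in>B. f i)" by (intro sum_mono) (auto simp: B_def)
  also have "\<dots> \<le> (\<Sum>i<n. f i)" by (rule sum_mono2) (use f_nonneg in \<open>auto simp: B_def\<close>)
  also have "\<dots> < real n * tau" by (rule total)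
  finally have "real (card B) < real n * alpha"
    using alpha \<open>0 < tau\<close> by (simp add: field_simps)
  then have "real n * (1 - alpha) \<le> real (card G)" using card_GB by (simp add: algebra_simps)
  then show ?thesis unfolding G_def by (simp add: nat_le_iff ceiling_le_iff)
qed

section \<open>The averaged Hessian\<close>

lemma hessian_average_ge:
  fixes n p K :: nat and tau alpha phi :: real and Sig X Y B Q :: rmat
  assumes n: "1 \<le> n" and alpha: "0 < alpha" and pd: "pos_def p Sig"
    and fit: "frob_sq n (K+1) (mmul (K+1) (mmul p X B) (centering (K+1))) < real n * tau"
    and design: "\<And>I. I \<subseteq> {..<n} \<Longrightarrow> card I = nat \<lceil>real n * (1 - alpha)\<rceil> \<Longrightarrow>
                   phi\<^sup>2 \<le> lambda_min p (restricted_gram n p (inv_sqrt p Sig) X I)"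
    and QQ: "mat_eq (K+1) (K+1) (mmul K Q (transp Q)) (centering (K+1))"
    and QtQ: "mat_eq K K (mmul (K+1) (transp Q) Q) idm"
  shows "loewner_ge (K * p)
           (mscale (1 / real n) (\<lambda>r s. \<Sum>i<n.
              kron p (hessian (\<lambda>u. mlloss (K+1) (Y i) (mvec K Q u)) (mvec p (transp (mmul (K+1) B Q)) (X i)))
                     (\<lambda>a b. X i a * X i b) r s))
           (mscale (exp (-4 * sqrt (tau / alpha)) / real (K+1) * phi\<^sup>2) (kron p idm Sig))"
proof -
  define u where "u i = mvec p (transp (mmul (K+1) B Q)) (X i)" for i
  define f where "f i = (\<Sum>k<K+1. (mvec K Q (u i) k)\<^sup>2)" for i
  have "(\<Sum>i<n. f i) = frob_sq n (K+1) (mmul (K+1) (mmul p X B) (centering (K+1)))"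
    unfolding f_def u_def frob_sq_def
    by (intro sum.cong refl) (simp only: lessThan_iff mvec_centering_factor_scores[OF QQ])
  then have "nat \<lceil>real n * (1 - alpha)\<rceil> \<le> card {i. i < n \<and> f i < tau / alpha}"
    using fit alpha unfolding f_def by (intro card_below_threshold_ge sum_nonneg) auto
  then obtain I where I_good: "I \<subseteq> {i. i < n \<and> f i < tau / alpha}"
    and I_card: "card I = nat \<lceil>real n * (1 - alpha)\<rceil>"
    by (meson obtain_subset_with_card_n)
  then have I: "I \<subseteq> {..<n}" by auto
  have "exp (-4 * sqrt (tau / alpha)) / real (K+1) * (\<Sum>a<K. (w a)\<^sup>2)
      \<le> quad K (hessian (\<lambda>u. mlloss (K+1) (Y i) (mvec K Q u)) (u i)) w" if "i \<in> I" for i w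
  proof (rule quad_hessian_mlloss_ge[OF QQ QtQ])
    fix k assume "k < K+1"
    then have "(mvec K Q (u i) k)\<^sup>2 \<le> f i"
      unfolding f_def by (intro member_le_sum) auto
    also have "f i < tau / alpha" using I_good that by auto
    finally show "\<bar>mvec K Q (u i) k\<bar> \<le> sqrt (tau / alpha)"
      using real_sqrt_le_mono[of "(mvec K Q (u i) k)\<^sup>2"] by simp
  qed
  then show ?thesis unfolding u_def
    using n I quad_hessian_mlloss_nonneg
      sum_sq_rows_ge_lambda_min[OF pd I _ design[OF I I_card]]
    by (intro loewner_ge_kron_gram) auto
qed

theorem lemmaS6p4:
  fixes K :: nat and tau alpha phi_lo :: real
  assumes "K \<ge> 1" and "tau > 0" and "0 < alpha" and "alpha < 1" and "phi_lo > 0"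
  shows "\<exists>c1 > 0. \<forall>(n::nat) (p::nat) (delta::real) (phi_hi::real)
           (Sig::rmat) (X::rmat) (Y::rmat) (Bm::rmat) (Q::rmat).
     n \<ge> 1 \<longrightarrow> p \<ge> 1 \<longrightarrow> delta > 1 \<longrightarrow>
     real p / real n \<le> 1 / delta \<longrightarrow> 1 / delta < 1 - alpha \<longrightarrow> phi_hi > 0 \<longrightarrow>
     pos_def p Sig \<longrightarrow>
     \<comment> \<open>(Y,X) \<in> U, with Bm a minimizer (hat B in the paper)\<close>
     (\<forall>B'. total_loss n p (K+1) Y X Bm \<le> total_loss n p (K+1) Y X B') \<longrightarrow>
     frob_sq n (K+1) (mmul (K+1) (mmul p X Bm) (centering (K+1))) < real n * tau \<longrightarrow>
     \<comment> \<open>X \<in> U_x\<close>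
     (\<forall>I. I \<subseteq> {..<n} \<longrightarrow> card I = nat \<lceil>real n * (1 - alpha)\<rceil> \<longrightarrow>
        lambda_min p (mscale (1 / real n)
          (mmul p (inv_sqrt p Sig) (mmul n (transp X) (mmul n (projI I) (mmul p X (inv_sqrt p Sig))))))
        \<ge> phi_lo\<^sup>2) \<longrightarrow>
     opnorm n p (mmul p X (inv_sqrt p Sig)) / sqrt (real n) \<le> phi_hi \<longrightarrow>
     \<comment> \<open>Q\<close>
     mat_eq (K+1) (K+1) (mmul K Q (transp Q)) (centering (K+1)) \<longrightarrow>
     mat_eq K K (mmul (K+1) (transp Q) Q) idm \<longrightarrow>
     loewner_ge (K * p)
       (mscale (1 / real n) (\<lambda>r s. \<Sum>i<n.
          kron p (hessian (\<lambda>u. mlloss (K+1) (Y i) (mvec K Q u))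
                          (mvec p (transp (mmul (K+1) Bm Q)) (X i)))
                 (\<lambda>a b. X i a * X i b) r s))
       (mscale c1 (kron p idm Sig))"
proof -
  let ?c1 = "exp (-4 * sqrt (tau / alpha)) / real (K+1) * phi_lo\<^sup>2"
  have "0 < ?c1" using \<open>phi_lo > 0\<close> by simp
  with \<open>0 < alpha\<close> show ?thesis
    by (intro exI[of _ ?c1] conjI allI impI hessian_average_ge) (simp_all add: restricted_gram_def)
qed

end
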